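(* Let $n\ge1$, let $\chi$ be an irreducible character of $S_n$, let $1\le k\le n$ and let $A,X^1,\ldots,X^k\in M_n(\mathbb{C})$. Then $$D^k d_\chi (A)(X^1,\ldots ,X^k)= \sum_{\sigma \in S_k}\sum _{\alpha, \beta \in Q_{k,n}}d_\chi \Big(X^\sigma_{\beta}[ \alpha | \beta ] \bigoplus_{\alpha | \beta}A(\alpha|\beta)\Big),$$ and in particular, for $X\in M_n(\mathbb{C})$, $$D^k d_\chi (A)(X,\ldots ,X)= k!\sum _{\alpha, \beta \in Q_{k,n}}d_\chi \Big(X [ \alpha | \beta ] \bigoplus_{\alpha |\beta}A(\alpha|\beta)\Big).$$
   Context: $d_\chi(Y)=\sum_{\sigma\in S_n}\chi(\sigma)\prod_{i=1}^n y_{i\sigma(i)}$ for $Y=(y_{ij})\in M_n(\mathbb{C})$. $D^k d_\chi(A)(X^1,\ldots,X^k)=\frac{\partial^k}{\partial t_1\cdots\partial t_k}\big|_{t_1=\cdots=t_k=0} d_\chi(A+t_1X^1+\cdots+t_kX^k)$. $Q_{k,n}$ is the set of strictly increasing maps $\{1,\ldots,k\}\to\{1,\ldots,n\}$; for $\alpha\in Q_{k,n}$, $\bar\alpha\in Q_{n-k,n}$ is the map whose image is the complement of $\operatorname{Im}\alpha$. For $\sigma\in S_k$ and $\beta\in Q_{k,n}$, $X^\sigma_\beta$ is the $n\times n$ matrix whose $\beta(p)$-th column equals the $\beta(p)$-th column of $X^{\sigma(p)}$ for $1\le p\le k$, all other columns being zero. For an $n\times n$ matrix $Y$, $Y[\alpha|\beta]$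 is the $k\times k$ matrix with $(i,j)$ entry $y_{\alpha(i)\beta(j)}$ and $Y(\alpha|\beta)$ is the $(n-k)\times(n-k)$ matrix obtained by deleting rows $\alpha(1),\ldots,\alpha(k)$ and columns $\beta(1),\ldots,\beta(k)$. For a $k\times k$ matrix $P$ and an $(n-k)\times(n-k)$ matrix $R$, $P\bigoplus_{\alpha|\beta}R=(z_{ij})$ is the $n\times n$ matrix with $z_{ij}=0$ if exactly one of $i\in\operatorname{Im}\alpha$, $j\in\operatorname{Im}\beta$ holds; $z_{ij}=p_{\alpha^{-1}(i)\beta^{-1}(j)}$ if $i\in\operatorname{Im}\alpha,\ j\in\operatorname{Im}\beta$; $z_{ij}=r_{\bar\alpha^{-1}(i)\bar\beta^{-1}(j)}$ if $i\notin\operatorname{Im}\alpha,\ j\notin\operatorname{Im}\beta$. *)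

theory Defs
  imports "HOL-Analysis.Analysis"
begin

text \<open>Conventions: an n x n complex matrix is a function Y :: nat => nat => complex whose
relevant entries are Y i j for i, j in {1..n} (1-based, as in the paper).\<close>

type_synonym cmat = "nat \<Rightarrow> nat \<Rightarrow> complex"

definition mat_mult :: "nat \<Rightarrow> cmat \<Rightarrow> cmat \<Rightarrow> cmat" where
  "mat_mult m P R = (\<lambda>i j. \<Sum>l=1..m. P i l * R l j)"

definition mat_id :: cmat where
  "mat_id = (\<lambda>i j. if i = j then 1 else 0)"

definition mat_apply :: "nat \<Rightarrow> cmat \<Rightarrow> (nat \<Rightarrow> complex) \<Rightarrow> (nat \<Rightarrow> complex)" where
  "mat_apply m P v = (\<lambda>i. \<Sum>j=1..m. P i j * v j)"

definition mat_trace :: "nat \<Rightarrow> cmat \<Rightarrow> complex" where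
  "mat_trace m P = (\<Sum>i=1..m. P i i)"

definition cvecs :: "nat \<Rightarrow> (nat \<Rightarrow> complex) set" where
  "cvecs m = {v. \<forall>i. i \<notin> {1..m} \<longrightarrow> v i = 0}"

definition is_subspace :: "nat \<Rightarrow> (nat \<Rightarrow> complex) set \<Rightarrow> bool" where
  "is_subspace m W \<longleftrightarrow> W \<subseteq> cvecs m \<and> (\<lambda>_. 0) \<in> W \<and>
     (\<forall>v\<in>W. \<forall>w\<in>W. (\<lambda>i. v i + w i) \<in> W) \<and> (\<forall>c. \<forall>v\<in>W. (\<lambda>i. c * v i) \<in> W)"

definition is_rep :: "nat \<Rightarrow> nat \<Rightarrow> ((nat \<Rightarrow> nat) \<Rightarrow> cmat) \<Rightarrow> bool" where
  "is_rep n m \<rho> \<longleftrightarrow> m \<ge> 1 \<and>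
     (\<forall>\<sigma>. \<sigma> permutes {1..n} \<longrightarrow> (\<forall>i j. (i \<notin> {1..m} \<or> j \<notin> {1..m}) \<longrightarrow> \<rho> \<sigma> i j = 0)) \<and>
     (\<forall>i\<in>{1..m}. \<forall>j\<in>{1..m}. \<rho> id i j = mat_id i j) \<and>
     (\<forall>\<sigma> \<tau>. \<sigma> permutes {1..n} \<longrightarrow> \<tau> permutes {1..n} \<longrightarrow>
        \<rho> (\<sigma> \<circ> \<tau>) = mat_mult m (\<rho> \<sigma>) (\<rho> \<tau>))"

definition is_irred_rep :: "nat \<Rightarrow> nat \<Rightarrow> ((nat \<Rightarrow> nat) \<Rightarrow> cmat) \<Rightarrow> bool" where
  "is_irred_rep n m \<rho> \<longleftrightarrow> is_rep n m \<rho> \<and>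
     (\<forall>W. is_subspace m W \<longrightarrow>
        (\<forall>\<sigma>. \<sigma> permutes {1..n} \<longrightarrow> (\<forall>v\<in>W. mat_apply m (\<rho> \<sigma>) v \<in> W)) \<longrightarrow>
        W = {\<lambda>_. 0} \<or> W = cvecs m)"

definition irreducible_character :: "nat \<Rightarrow> ((nat \<Rightarrow> nat) \<Rightarrow> complex) \<Rightarrow> bool" where
  "irreducible_character n chi \<longleftrightarrow>
     (\<exists>m \<rho>. is_irred_rep n m \<rho> \<and> (\<forall>\<sigma>. \<sigma> permutes {1..n} \<longrightarrow> chi \<sigma> = mat_trace m (\<rho> \<sigma>)))"

definition d_chi :: "nat \<Rightarrow> ((nat \<Rightarrow> nat) \<Rightarrow> complex) \<Rightarrow> cmat \<Rightarrow> complex" where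
  "d_chi n chi Y = (\<Sum>\<sigma>\<in>{\<sigma>. \<sigma> permutes {1..n}}. chi \<sigma> * (\<Prod>i=1..n. Y i (\<sigma> i)))"

definition partial :: "nat \<Rightarrow> ((nat \<Rightarrow> complex) \<Rightarrow> complex) \<Rightarrow> (nat \<Rightarrow> complex) \<Rightarrow> complex" where
  "partial i f = (\<lambda>t. deriv (\<lambda>s. f (t(i := s))) (t i))"

text \<open>D^k d_chi(A)(X^1,...,X^k) = d^k/dt_1...dt_k at t = 0 of d_chi(A + t_1 X^1 + ... + t_k X^k).\<close>
definition Dk_d_chi :: "nat \<Rightarrow> ((nat \<Rightarrow> nat) \<Rightarrow> complex) \<Rightarrow> nat \<Rightarrow> cmat \<Rightarrow> (nat \<Rightarrow> cmat) \<Rightarrow> complex" where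
  "Dk_d_chi n chi k A Xs =
     foldr partial [1..<k+1]
       (\<lambda>t. d_chi n chi (\<lambda>i j. A i j + (\<Sum>p=1..k. t p * Xs p i j))) (\<lambda>_. 0)"

definition Q :: "nat \<Rightarrow> nat \<Rightarrow> (nat \<Rightarrow> nat) set" where
  "Q k n = {\<alpha>. strict_mono_on {1..k} \<alpha> \<and> \<alpha> ` {1..k} \<subseteq> {1..n} \<and> (\<forall>i. i \<notin> {1..k} \<longrightarrow> \<alpha> i = 0)}"

definition compl_seq :: "nat \<Rightarrow> nat \<Rightarrow> (nat \<Rightarrow> nat) \<Rightarrow> (nat \<Rightarrow> nat)" where
  "compl_seq k n \<alpha> = (THE \<gamma>. \<gamma> \<in> Q (n - k) n \<and> \<gamma> ` {1..n-k} = {1..n} - \<alpha> ` {1..k})"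

text \<open>X^\<sigma>_\<beta>: column \<beta>(p) equals column \<beta>(p) of X^{\<sigma>(p)}; other columns zero.\<close>
definition X_sigma_beta :: "nat \<Rightarrow> (nat \<Rightarrow> cmat) \<Rightarrow> (nat \<Rightarrow> nat) \<Rightarrow> (nat \<Rightarrow> nat) \<Rightarrow> cmat" where
  "X_sigma_beta k Xs \<sigma> \<beta> = (\<lambda>i j. if j \<in> \<beta> ` {1..k}
       then Xs (\<sigma> (the_inv_into {1..k} \<beta> j)) i j else 0)"

definition submat :: "nat \<Rightarrow> cmat \<Rightarrow> (nat \<Rightarrow> nat) \<Rightarrow> (nat \<Rightarrow> nat) \<Rightarrow> cmat" where
  "submat k Y \<alpha> \<beta> = (\<lambda>i j. if i \<in> {1..k} \<and> j \<in> {1..k} then Y (\<alpha> i) (\<beta> j) else 0)"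

definition compl_submat :: "nat \<Rightarrow> nat \<Rightarrow> cmat \<Rightarrow> (nat \<Rightarrow> nat) \<Rightarrow> (nat \<Rightarrow> nat) \<Rightarrow> cmat" where
  "compl_submat n k Y \<alpha> \<beta> = submat (n - k) Y (compl_seq k n \<alpha>) (compl_seq k n \<beta>)"

definition dirsum_ab :: "nat \<Rightarrow> nat \<Rightarrow> cmat \<Rightarrow> (nat \<Rightarrow> nat) \<Rightarrow> (nat \<Rightarrow> nat) \<Rightarrow> cmat \<Rightarrow> cmat" where
  "dirsum_ab n k P \<alpha> \<beta> R = (\<lambda>i j.
     if i \<notin> {1..n} \<or> j \<notin> {1..n} then 0
     else if i \<in> \<alpha> ` {1..k} \<and> j \<in> \<beta> ` {1..k}
       then P (the_inv_into {1..k} \<alpha> i) (the_inv_into {1..k} \<beta> j)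
     else if i \<notin> \<alpha> ` {1..k} \<and> j \<notin> \<beta> ` {1..k}
       then R (the_inv_into {1..n-k} (compl_seq k n \<alpha>) i)
              (the_inv_into {1..n-k} (compl_seq k n \<beta>) j)
     else 0)"

end

theory Submission
  imports Defs
begin

text \<open>Expanding \<open>d_chi (A + \<Sum>\<^sub>p t\<^sub>p X\<^sup>p)\<close> multilinearly, the mixed derivative in \<open>t\<^sub>1, \<dots>, t\<^sub>k\<close>
at \<open>t = 0\<close> keeps, in the product over the rows \<open>i\<close> belonging to a permutation \<open>\<pi>\<close>, exactly the
terms in which the \<open>k\<close> variables sit in \<open>k\<close> distinct rows: one term
\<open>\<Prod>\<^sub>p X\<^sup>p (g p) (\<pi> (g p)) * \<Prod>\<^bsub>i \<notin> g ` {1..k}\<^esub> A i (\<pi> i)\<close> for each injection \<open>g : {1..k} \<rightarrow> {1..n}\<close>.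
Every such injection factors uniquely as \<open>inv \<pi> \<circ> \<beta> \<circ> inv \<sigma>\<close> with \<open>\<beta> \<in> Q k n\<close> enumerating the
columns used and \<open>\<sigma>\<close> a permutation of \<open>{1..k}\<close>. On the other side, the term of
\<open>d_chi (X\<^sup>\<sigma>\<^sub>\<beta>[\<alpha>|\<beta>] \<oplus>\<^bsub>\<alpha>|\<beta>\<^esub> A(\<alpha>|\<beta>))\<close> indexed by \<open>\<pi>\<close> vanishes unless \<open>\<pi>\<close> maps \<open>Im \<alpha>\<close> onto
\<open>Im \<beta>\<close>; for given \<open>\<pi>\<close> and \<open>\<beta>\<close> this singles out one \<open>\<alpha>\<close>, and its term is the one indexed by
\<open>(\<sigma>, \<beta>)\<close> above.\<close>

text \<open>Extensional, so that an injection on \<open>insert q D\<close> is determined by its restriction to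
\<open>D\<close> and its value at \<open>q\<close>.\<close>

definition injections :: "'a set \<Rightarrow> 'b set \<Rightarrow> ('a \<Rightarrow> 'b) set" where
  "injections D I = {g \<in> D \<rightarrow>\<^sub>E I. inj_on g D}"

lemma finite_injections: "finite D \<Longrightarrow> finite I \<Longrightarrow> finite (injections D I)"
  unfolding injections_def by (rule finite_subset[of _ "D \<rightarrow>\<^sub>E I"]) (auto intro: finite_PiE)

lemma bij_betw_injections_insert:
  assumes "q \<notin> D"
  shows "bij_betw (\<lambda>(g, i). g(q := i)) (SIGMA g:injections D I. I - g ` D) (injections (insert q D) I)"
proof (rule bij_betw_byWitness[where f' = "\<lambda>g. (g(q := undefined), g q)"])
  have "g q = undefined" if "g \<in> injections D I" for g
    using that assms by (auto simp: injections_def PiE_def extensional_def)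
  then show "\<forall>z\<in>SIGMA g:injections D I. I - g ` D. (\<lambda>g. (g(q := undefined), g q)) ((\<lambda>(g, i). g(q := i)) z) = z"
    by (auto simp: fun_upd_idem)
  show "(\<lambda>(g, i). g(q := i)) ` (SIGMA g:injections D I. I - g ` D) \<subseteq> injections (insert q D) I"
  proof clarify
    fix g i assume "g \<in> injections D I" "i \<in> I" "i \<notin> g ` D"
    moreover have "inj_on (g(q := i)) D \<longleftrightarrow> inj_on g D"
      using assms by (intro inj_on_cong) auto
    moreover have "(g(q := i)) ` D = g ` D"
      using assms by auto
    ultimately show "g(q := i) \<in> injections (insert q D) I"
      using assms by (auto simp: injections_def PiE_def extensional_def)
  qed
  show "(\<lambda>g. (g(q := undefined), g q)) ` injections (insert q D) I \<subseteq> (SIGMA g:injections D I. I - g ` D)"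
  proof
    fix z assume "z \<in> (\<lambda>g. (g(q := undefined), g q)) ` injections (insert q D) I"
    then obtain g where g: "g \<in> injections (insert q D) I" and z: "z = (g(q := undefined), g q)"
      by blast
    then have "inj_on (g(q := undefined)) D"
      using assms by (subst inj_on_cong[of D _ g]) (auto simp: injections_def intro: inj_on_subset)
    moreover have "(g(q := undefined)) ` D = g ` D"
      using assms by auto
    moreover have "g q \<notin> g ` D"
      using g assms by (auto simp: injections_def)
    ultimately show "z \<in> (SIGMA g:injections D I. I - g ` D)"
      unfolding z using g assms by (auto simp: injections_def PiE_def extensional_def)
  qed
qed auto

lemma sum_injections_insert:
  assumes "finite D" "finite I" "q \<notin> D"
  shows "(\<Sum>g\<in>injections D I. \<Sum>i\<in>I - g ` D. H (g(q := i))) = (\<Sum>g\<in>injections (insert q D) I. H g)"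
proof -
  have "(\<Sum>g\<in>injections D I. \<Sum>i\<in>I - g ` D. H (g(q := i)))
      = (\<Sum>(g, i)\<in>(SIGMA g:injections D I. I - g ` D). H (g(q := i)))"
    using assms by (intro sum.Sigma finite_injections) auto
  also have "\<dots> = (\<Sum>g\<in>injections (insert q D) I. H g)"
    using sum.reindex_bij_betw[OF bij_betw_injections_insert[OF assms(3)], of H]
    by (simp add: case_prod_unfold)
  finally show ?thesis .
qed

lemma sum_injections_insert_prod:
  fixes y :: "'b \<Rightarrow> 'a \<Rightarrow> 'c::comm_semiring_1"
  assumes "finite D" "finite I" "q \<notin> D"
  shows "(\<Sum>g\<in>injections D I. (\<Prod>p\<in>D. y (g p) p) *
            (\<Sum>i\<in>I - g ` D. y i q * (\<Prod>j\<in>I - g ` D - {i}. f j)))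
       = (\<Sum>g\<in>injections (insert q D) I. (\<Prod>p\<in>insert q D. y (g p) p) * (\<Prod>j\<in>I - g ` insert q D. f j))"
proof -
  define W where "W g = (\<Prod>p\<in>insert q D. y (g p) p) * (\<Prod>j\<in>I - g ` insert q D. f j)" for g
  have W_upd: "(\<Prod>p\<in>D. y (g p) p) * (y i q * (\<Prod>j\<in>I - g ` D - {i}. f j)) = W (g(q := i))" for g i
  proof -
    have "(\<Prod>p\<in>D. y ((g(q := i)) p) p) = (\<Prod>p\<in>D. y (g p) p)"
      using assms(3) by (intro prod.cong) auto
    moreover have "I - (g(q := i)) ` insert q D = I - g ` D - {i}"
      using assms(3) by auto
    ultimately show ?thesis
      unfolding W_def using assms(1,3) by (simp add: mult_ac fun_upd_same del: fun_upd_apply)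
  qed
  have "(\<Sum>g\<in>injections D I. (\<Prod>p\<in>D. y (g p) p) *
            (\<Sum>i\<in>I - g ` D. y i q * (\<Prod>j\<in>I - g ` D - {i}. f j)))
      = (\<Sum>g\<in>injections D I. \<Sum>i\<in>I - g ` D. W (g(q := i)))"
    by (simp only: sum_distrib_left W_upd)
  also have "\<dots> = sum W (injections (insert q D) I)"
    by (rule sum_injections_insert[OF assms])
  finally show ?thesis
    unfolding W_def .
qed

lemma affine_form_has_field_derivative:
  assumes "finite P" "q \<in> P"
  shows "((\<lambda>s. a + (\<Sum>p\<in>P. (t(q := s)) p * x p)) has_field_derivative x q) (at z)"
proof -
  have "((\<lambda>s. a + (\<Sum>p\<in>P. (t(q := s)) p * x p)) has_field_derivative
          0 + (\<Sum>p\<in>P. if p = q then x p else 0)) (at z)"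
    by (intro derivative_intros) (auto intro!: derivative_eq_intros)
  then show ?thesis
    using assms by simp
qed

lemma foldr_partial_sum_prod_affine:
  fixes c :: "'c \<Rightarrow> complex" and a :: "'c \<Rightarrow> 'b \<Rightarrow> complex" and x :: "'c \<Rightarrow> 'b \<Rightarrow> nat \<Rightarrow> complex"
  assumes fin: "finite I" "finite P" "finite R" and "distinct ps" "set ps \<subseteq> P"
  shows "foldr partial ps (\<lambda>t. \<Sum>\<pi>\<in>R. c \<pi> * (\<Prod>i\<in>I. a \<pi> i + (\<Sum>p\<in>P. t p * x \<pi> i p))) t
       = (\<Sum>\<pi>\<in>R. c \<pi> * (\<Sum>g\<in>injections (set ps) I. (\<Prod>p\<in>set ps. x \<pi> (g p) p) *
              (\<Prod>i\<in>I - g ` set ps. a \<pi> i + (\<Sum>p\<in>P. t p * x \<pi> i p))))"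
  using assms(4,5)
proof (induction ps arbitrary: t)
  case Nil
  then show ?case by (simp add: injections_def)
next
  case (Cons q ps)
  let ?D = "set ps"
  let ?h = "\<lambda>t \<pi> i. a \<pi> i + (\<Sum>p\<in>P. t p * x \<pi> i p)"
  define G where "G D t = (\<Sum>\<pi>\<in>R. c \<pi> * (\<Sum>g\<in>injections D I. (\<Prod>p\<in>D. x \<pi> (g p) p) *
              (\<Prod>i\<in>I - g ` D. ?h t \<pi> i)))" for D t
  have q: "q \<notin> ?D" "q \<in> P" and fin_D: "finite ?D"
    using Cons.prems by auto
  have "((\<lambda>s. G ?D (t(q := s))) has_field_derivative
      (\<Sum>\<pi>\<in>R. c \<pi> * (\<Sum>g\<in>injections ?D I. (\<Prod>p\<in>?D. x \<pi> (g p) p) *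
          (\<Sum>i\<in>I - g ` ?D. x \<pi> i q * (\<Prod>j\<in>I - g ` ?D - {i}. ?h (t(q := t q)) \<pi> j))))) (at (t q))"
    unfolding G_def
    by (intro DERIV_sum DERIV_cmult has_field_derivative_prod affine_form_has_field_derivative fin q)
  then have "((\<lambda>s. G ?D (t(q := s))) has_field_derivative
      (\<Sum>\<pi>\<in>R. c \<pi> * (\<Sum>g\<in>injections ?D I. (\<Prod>p\<in>?D. x \<pi> (g p) p) *
          (\<Sum>i\<in>I - g ` ?D. x \<pi> i q * (\<Prod>j\<in>I - g ` ?D - {i}. ?h t \<pi> j))))) (at (t q))"
    by simp
  moreover have "(\<Sum>g\<in>injections ?D I. (\<Prod>p\<in>?D. x \<pi> (g p) p) *
          (\<Sum>i\<in>I - g ` ?D. x \<pi> i q * (\<Prod>j\<in>I - g ` ?D - {i}. ?h t \<pi> j)))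
      = (\<Sum>g\<in>injections (insert q ?D) I. (\<Prod>p\<in>insert q ?D. x \<pi> (g p) p) *
          (\<Prod>i\<in>I - g ` insert q ?D. ?h t \<pi> i))" for \<pi>
    by (rule sum_injections_insert_prod[OF fin_D fin(1) q(1)])
  ultimately have "((\<lambda>s. G ?D (t(q := s))) has_field_derivative G (set (q # ps)) t) (at (t q))"
    by (simp add: G_def)
  moreover have "foldr partial ps (\<lambda>t. \<Sum>\<pi>\<in>R. c \<pi> * (\<Prod>i\<in>I. ?h t \<pi> i)) = G ?D"
    using Cons by (auto simp: G_def)
  ultimately have "foldr partial (q # ps) (\<lambda>t. \<Sum>\<pi>\<in>R. c \<pi> * (\<Prod>i\<in>I. ?h t \<pi> i)) t = G (set (q # ps)) t"
    by (simp only: foldr.simps o_apply partial_def DERIV_imp_deriv)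
  then show ?case
    unfolding G_def .
qed

lemma Dk_d_chi_expansion:
  "Dk_d_chi n chi k A Xs = (\<Sum>\<pi> | \<pi> permutes {1..n}. chi \<pi> *
     (\<Sum>g\<in>injections {1..k} {1..n}.
        (\<Prod>p=1..k. Xs p (g p) (\<pi> (g p))) * (\<Prod>i\<in>{1..n} - g ` {1..k}. A i (\<pi> i))))"
proof -
  have "set [1..<k+1] = {1..k}"
    by auto
  moreover have "finite {\<pi>. \<pi> permutes {1..n}}"
    by (simp add: finite_permutations)
  ultimately show ?thesis
    unfolding Dk_d_chi_def d_chi_def
    using foldr_partial_sum_prod_affine[where I = "{1..n}" and P = "{1..k}" and ps = "[1..<k+1]"
        and a = "\<lambda>\<pi> i. A i (\<pi> i)" and x = "\<lambda>\<pi> i p. Xs p i (\<pi> i)" and t = "\<lambda>_. 0"]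
    by simp
qed

lemma Q_inj_on: "\<gamma> \<in> Q m n \<Longrightarrow> inj_on \<gamma> {1..m}"
  unfolding Q_def by (auto intro: strict_mono_on_imp_inj_on)

lemma Q_image_subset: "\<gamma> \<in> Q m n \<Longrightarrow> \<gamma> ` {1..m} \<subseteq> {1..n}"
  unfolding Q_def by auto

lemma card_image_Q:
  assumes "\<gamma> \<in> Q m n"
  shows "card (\<gamma> ` {1..m}) = m"
proof -
  have "card (\<gamma> ` {1..m}) = card {1..m}"
    using assms by (intro card_image Q_inj_on)
  then show ?thesis
    by simp
qed

lemma finite_Q: "finite (Q m n)"
proof (rule finite_subset)
  let ?ext = "\<lambda>f i. if i \<in> {1..m} then f i else 0"
  show "Q m n \<subseteq> ?ext ` ({1..m} \<rightarrow>\<^sub>E {1..n})"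
  proof
    fix \<gamma> assume "\<gamma> \<in> Q m n"
    then have "\<gamma> = ?ext (restrict \<gamma> {1..m})" and "restrict \<gamma> {1..m} \<in> {1..m} \<rightarrow>\<^sub>E {1..n}"
      by (auto simp: Q_def fun_eq_iff)
    then show "\<gamma> \<in> ?ext ` ({1..m} \<rightarrow>\<^sub>E {1..n})"
      by (rule image_eqI)
  qed
qed (auto intro: finite_PiE)

lemma sorted_list_of_set_image_Q:
  assumes "\<gamma> \<in> Q m n"
  shows "sorted_list_of_set (\<gamma> ` {1..m}) = map \<gamma> [1..<m+1]"
proof -
  have "strict_mono_on {1..m} \<gamma>"
    using assms by (simp add: Q_def)
  then have "sorted_wrt (<) (map \<gamma> [1..<m+1])"
    unfolding sorted_wrt_iff_nth_less
    by (simp del: upt_Suc add: nth_upt strict_mono_onD)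
  moreover have "length (map \<gamma> [1..<m+1]) = card (\<gamma> ` {1..m})"
    using card_image_Q[OF assms] by simp
  ultimately show ?thesis
    using sorted_list_of_set_unique[of "\<gamma> ` {1..m}" "map \<gamma> [1..<m+1]"] by auto
qed

lemma Q_eqI:
  assumes "\<gamma> \<in> Q m n" "\<delta> \<in> Q m n" "\<gamma> ` {1..m} = \<delta> ` {1..m}"
  shows "\<gamma> = \<delta>"
proof
  fix i
  have "map \<gamma> [1..<m+1] = map \<delta> [1..<m+1]"
    using assms by (metis sorted_list_of_set_image_Q)
  then have "\<gamma> i = \<delta> i" if "i \<in> {1..m}"
    using that by (simp del: upt_Suc add: map_eq_conv)
  moreover have "\<gamma> i = \<delta> i" if "i \<notin> {1..m}"
    using that assms(1,2) by (simp add: Q_def)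
  ultimately show "\<gamma> i = \<delta> i"
    by blast
qed

lemma Q_exists:
  assumes "S \<subseteq> {1..n}" "card S = m"
  obtains \<gamma> where "\<gamma> \<in> Q m n" "\<gamma> ` {1..m} = S"
proof -
  define xs where "xs = sorted_list_of_set S"
  have "finite S"
    using assms(1) finite_subset by blast
  then have xs: "length xs = m" "sorted_wrt (<) xs" "set xs = S"
    using assms by (simp_all add: xs_def)
  define \<gamma> where "\<gamma> i = (if i \<in> {1..m} then xs ! (i - 1) else 0)" for i
  have "\<gamma> ` {1..m} = (\<lambda>j. xs ! j) ` {..<m}"
  proof (rule set_eqI, rule iffI)
    fix y assume "y \<in> \<gamma> ` {1..m}"
    then obtain i where "i \<in> {1..m}" "y = xs ! (i - 1)"
      by (auto simp: \<gamma>_def)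
    then show "y \<in> (\<lambda>j. xs ! j) ` {..<m}"
      by (intro image_eqI[of _ _ "i - 1"]) auto
  next
    fix y assume "y \<in> (\<lambda>j. xs ! j) ` {..<m}"
    then obtain j where "j < m" "y = xs ! j"
      by auto
    then show "y \<in> \<gamma> ` {1..m}"
      by (intro image_eqI[of _ _ "j + 1"]) (auto simp: \<gamma>_def)
  qed
  also have "\<dots> = S"
    using xs by (auto simp: set_conv_nth)
  finally have image: "\<gamma> ` {1..m} = S" .
  have "strict_mono_on {1..m} \<gamma>"
  proof (rule strict_mono_onI)
    fix r s assume "r \<in> {1..m}" "s \<in> {1..m}" "r < s"
    then show "\<gamma> r < \<gamma> s"
      using sorted_wrt_nth_less[OF xs(2), of "r - 1" "s - 1"] xs(1) by (auto simp: \<gamma>_def)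
  qed
  moreover have "\<gamma> i = 0" if "i \<notin> {1..m}" for i
    using that unfolding \<gamma>_def by auto
  ultimately have "\<gamma> \<in> Q m n"
    using image assms(1) unfolding Q_def by blast
  with image show thesis
    using that by blast
qed

lemma compl_seq:
  assumes "\<alpha> \<in> Q k n"
  shows "compl_seq k n \<alpha> \<in> Q (n - k) n" and "compl_seq k n \<alpha> ` {1..n-k} = {1..n} - \<alpha> ` {1..k}"
proof -
  have "card ({1..n} - \<alpha> ` {1..k}) = n - k"
    using Q_image_subset[OF assms] card_image_Q[OF assms] by (simp add: card_Diff_subset)
  then obtain \<gamma> where "\<gamma> \<in> Q (n - k) n" "\<gamma> ` {1..n-k} = {1..n} - \<alpha> ` {1..k}"
    using Q_exists[of "{1..n} - \<alpha> ` {1..k}" n "n - k"] by blast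
  then have "\<exists>!\<gamma>. \<gamma> \<in> Q (n - k) n \<and> \<gamma> ` {1..n-k} = {1..n} - \<alpha> ` {1..k}"
    by (metis Q_eqI)
  from theI'[OF this] show "compl_seq k n \<alpha> \<in> Q (n - k) n"
      and "compl_seq k n \<alpha> ` {1..n-k} = {1..n} - \<alpha> ` {1..k}"
    unfolding compl_seq_def by blast+
qed

lemma the_inv_into_Q:
  assumes "\<gamma> \<in> Q m n" "i \<in> \<gamma> ` {1..m}"
  shows "the_inv_into {1..m} \<gamma> i \<in> {1..m}" and "\<gamma> (the_inv_into {1..m} \<gamma> i) = i"
  using the_inv_into_into[OF Q_inj_on[OF assms(1)] assms(2) subset_refl]
    f_the_inv_into_f[OF Q_inj_on[OF assms(1)] assms(2)] .

lemma dirsum_ab_submat_compl_submat: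
  assumes \<alpha>: "\<alpha> \<in> Q k n" and \<beta>: "\<beta> \<in> Q k n" and "i \<in> {1..n}" "j \<in> {1..n}"
  shows "dirsum_ab n k (submat k Y \<alpha> \<beta>) \<alpha> \<beta> (compl_submat n k A \<alpha> \<beta>) i j =
     (if i \<in> \<alpha> ` {1..k} \<and> j \<in> \<beta> ` {1..k} then Y i j
      else if i \<notin> \<alpha> ` {1..k} \<and> j \<notin> \<beta> ` {1..k} then A i j else 0)"
proof -
  have "i \<in> compl_seq k n \<alpha> ` {1..n-k}" if "i \<notin> \<alpha> ` {1..k}"
    using that assms(3) compl_seq(2)[OF \<alpha>] by blast
  moreover have "j \<in> compl_seq k n \<beta> ` {1..n-k}" if "j \<notin> \<beta> ` {1..k}"
    using that assms(4) compl_seq(2)[OF \<beta>] by blast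
  ultimately show ?thesis
    using assms the_inv_into_Q[OF \<alpha>, of i] the_inv_into_Q[OF \<beta>, of j]
      the_inv_into_Q[OF compl_seq(1)[OF \<alpha>], of i] the_inv_into_Q[OF compl_seq(1)[OF \<beta>], of j]
    by (simp add: dirsum_ab_def compl_submat_def submat_def)
qed


lemma prod_dirsum_ab_permutes:
  assumes \<alpha>: "\<alpha> \<in> Q k n" and \<beta>: "\<beta> \<in> Q k n" and \<pi>: "\<pi> permutes {1..n}"
  shows "(\<Prod>i=1..n. dirsum_ab n k (submat k Y \<alpha> \<beta>) \<alpha> \<beta> (compl_submat n k A \<alpha> \<beta>) i (\<pi> i)) =
     (if \<pi> ` \<alpha> ` {1..k} = \<beta> ` {1..k}
      then (\<Prod>i\<in>\<alpha> ` {1..k}. Y i (\<pi> i)) * (\<Prod>i\<in>{1..n} - \<alpha> ` {1..k}. A i (\<pi> i)) else 0)"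
    (is "(\<Prod>i=1..n. ?M i (\<pi> i)) = _")
proof -
  let ?a = "\<alpha> ` {1..k}" and ?b = "\<beta> ` {1..k}"
  have \<pi>_in: "\<pi> i \<in> {1..n}" if "i \<in> {1..n}" for i
    using permutes_in_image[OF \<pi>] that by simp
  have a_sub: "?a \<subseteq> {1..n}"
    using Q_image_subset[OF \<alpha>] .
  show ?thesis
  proof (cases "\<pi> ` ?a = ?b")
    case True
    have "?M i (\<pi> i) = (if i \<in> ?a then Y i (\<pi> i) else A i (\<pi> i))" if "i \<in> {1..n}" for i
    proof -
      have "\<pi> i \<in> ?b \<longleftrightarrow> i \<in> ?a"
        unfolding True[symmetric] using permutes_inj[OF \<pi>] by (rule inj_image_mem_iff)
      then show ?thesis
        using dirsum_ab_submat_compl_submat[OF \<alpha> \<beta> that \<pi>_in[OF that]] by simp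
    qed
    then have "(\<Prod>i=1..n. ?M i (\<pi> i)) = (\<Prod>i=1..n. if i \<in> ?a then Y i (\<pi> i) else A i (\<pi> i))"
      by (rule prod.cong[OF refl])
    also have "\<dots> = (\<Prod>i\<in>?a. Y i (\<pi> i)) * (\<Prod>i\<in>{1..n} - ?a. A i (\<pi> i))"
      using a_sub by (simp add: prod.If_cases Int_absorb1 Diff_eq)
    finally show ?thesis
      using True by simp
  next
    case False
    have "\<exists>i\<in>?a. \<pi> i \<notin> ?b"
    proof (rule ccontr)
      assume "\<not> (\<exists>i\<in>?a. \<pi> i \<notin> ?b)"
      then have "\<pi> ` ?a \<subseteq> ?b"
        by auto
      moreover have "card (\<pi> ` ?a) = card ?b"
        using card_image_Q[OF \<alpha>] card_image_Q[OF \<beta>] card_image[OF permutes_inj_on[OF \<pi>]] by simp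
      ultimately show False
        using False by (simp add: card_subset_eq)
    qed
    then obtain i where i: "i \<in> ?a" "\<pi> i \<notin> ?b"
      by blast
    then have "i \<in> {1..n}"
      using a_sub by blast
    then have "?M i (\<pi> i) = 0"
      using dirsum_ab_submat_compl_submat[OF \<alpha> \<beta> _ \<pi>_in] i by simp
    with \<open>i \<in> {1..n}\<close> show ?thesis
      using False by (metis (no_types, lifting) finite_atLeastAtMost prod_zero_iff)
  qed
qed

lemma sum_Q_prod_dirsum_ab:
  assumes \<beta>: "\<beta> \<in> Q k n" and \<pi>: "\<pi> permutes {1..n}"
  shows "(\<Sum>\<alpha>\<in>Q k n. \<Prod>i=1..n. dirsum_ab n k (submat k Y \<alpha> \<beta>) \<alpha> \<beta> (compl_submat n k A \<alpha> \<beta>) i (\<pi> i)) =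
     (\<Prod>i\<in>inv \<pi> ` \<beta> ` {1..k}. Y i (\<pi> i)) * (\<Prod>i\<in>{1..n} - inv \<pi> ` \<beta> ` {1..k}. A i (\<pi> i))"
proof -
  have "inv \<pi> ` \<beta> ` {1..k} \<subseteq> {1..n}"
    using Q_image_subset[OF \<beta>] permutes_in_image[OF permutes_inv[OF \<pi>]] by auto
  moreover have "card (inv \<pi> ` \<beta> ` {1..k}) = k"
    using card_image[OF permutes_inj_on[OF permutes_inv[OF \<pi>]]] card_image_Q[OF \<beta>] by simp
  ultimately obtain \<alpha>\<^sub>0 where \<alpha>\<^sub>0: "\<alpha>\<^sub>0 \<in> Q k n" "\<alpha>\<^sub>0 ` {1..k} = inv \<pi> ` \<beta> ` {1..k}"
    by (rule Q_exists)
  have \<alpha>\<^sub>0_iff: "\<pi> ` \<alpha> ` {1..k} = \<beta> ` {1..k} \<longleftrightarrow> \<alpha> = \<alpha>\<^sub>0" if "\<alpha> \<in> Q k n" for \<alpha>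
  proof -
    have "\<pi> ` \<alpha> ` {1..k} = \<beta> ` {1..k} \<longleftrightarrow> \<alpha> ` {1..k} = inv \<pi> ` \<beta> ` {1..k}"
      using image_inv_f_f[OF permutes_inj[OF \<pi>]] image_f_inv_f[OF permutes_surj[OF \<pi>]] by metis
    then show ?thesis
      using Q_eqI[OF that \<alpha>\<^sub>0(1)] \<alpha>\<^sub>0(2) by auto
  qed
  have "(\<Sum>\<alpha>\<in>Q k n. \<Prod>i=1..n. dirsum_ab n k (submat k Y \<alpha> \<beta>) \<alpha> \<beta> (compl_submat n k A \<alpha> \<beta>) i (\<pi> i)) =
     (\<Sum>\<alpha>\<in>Q k n. if \<alpha> = \<alpha>\<^sub>0
        then (\<Prod>i\<in>\<alpha>\<^sub>0 ` {1..k}. Y i (\<pi> i)) * (\<Prod>i\<in>{1..n} - \<alpha>\<^sub>0 ` {1..k}. A i (\<pi> i)) else 0)"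
  proof (rule sum.cong[OF refl])
    fix \<alpha> assume \<alpha>: "\<alpha> \<in> Q k n"
    show "(\<Prod>i=1..n. dirsum_ab n k (submat k Y \<alpha> \<beta>) \<alpha> \<beta> (compl_submat n k A \<alpha> \<beta>) i (\<pi> i)) =
      (if \<alpha> = \<alpha>\<^sub>0
        then (\<Prod>i\<in>\<alpha>\<^sub>0 ` {1..k}. Y i (\<pi> i)) * (\<Prod>i\<in>{1..n} - \<alpha>\<^sub>0 ` {1..k}. A i (\<pi> i)) else 0)"
      unfolding prod_dirsum_ab_permutes[OF \<alpha> \<beta> \<pi>] \<alpha>\<^sub>0_iff[OF \<alpha>] by simp
  qed
  then show ?thesis
    using \<alpha>\<^sub>0 by (simp add: finite_Q)
qed

lemma bij_betw_injections_comp_permutes: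
  assumes "\<pi> permutes N"
  shows "bij_betw (\<lambda>g. restrict (\<pi> \<circ> g) D) (injections D N) (injections D N)"
proof (rule bij_betw_byWitness[where f' = "\<lambda>g. restrict (inv \<pi> \<circ> g) D"])
  have comp_in: "restrict (h \<circ> g) D \<in> injections D N" if "h permutes N" "g \<in> injections D N" for h g
  proof -
    have "inj_on (restrict (h \<circ> g) D) D \<longleftrightarrow> inj_on (h \<circ> g) D"
      by (rule inj_on_cong) simp
    then show ?thesis
      using that permutes_in_image[OF that(1)] comp_inj_on[OF _ permutes_inj_on[OF that(1)]]
      by (auto simp: injections_def)
  qed
  show "(\<lambda>g. restrict (\<pi> \<circ> g) D) ` injections D N \<subseteq> injections D N"
    using comp_in[OF assms] by auto
  show "(\<lambda>g. restrict (inv \<pi> \<circ> g) D) ` injections D N \<subseteq> injections D N"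
    using comp_in[OF permutes_inv[OF assms]] by auto
  have "undefined = g x" if "g \<in> injections D N" "x \<notin> D" for g x
    using that by (auto simp: injections_def PiE_def extensional_def)
  then show "\<forall>g\<in>injections D N. restrict (inv \<pi> \<circ> restrict (\<pi> \<circ> g) D) D = g"
      and "\<forall>g\<in>injections D N. restrict (\<pi> \<circ> restrict (inv \<pi> \<circ> g) D) D = g"
    using permutes_inverses[OF assms] by (auto simp: fun_eq_iff restrict_def)
qed

lemma injections_decompose:
  assumes g: "g \<in> injections {1..k} {1..n}"
  obtains \<sigma> \<beta> where "\<sigma> permutes {1..k}" "\<beta> \<in> Q k n" "g = restrict (\<lambda>p. \<beta> (inv \<sigma> p)) {1..k}"
proof -
  let ?K = "{1..k}"
  have g_ext: "g \<in> ?K \<rightarrow>\<^sub>E {1..n}" and g_inj: "inj_on g ?K"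
    using g by (auto simp: injections_def)
  have "g ` ?K \<subseteq> {1..n}" "card (g ` ?K) = k"
    using g_ext card_image[OF g_inj] by auto
  then obtain \<beta> where \<beta>: "\<beta> \<in> Q k n" "\<beta> ` ?K = g ` ?K"
    by (rule Q_exists)
  define \<tau> where "\<tau> p = (if p \<in> ?K then the_inv_into ?K \<beta> (g p) else p)" for p
  have "bij_betw \<beta> ?K (g ` ?K)"
    using Q_inj_on[OF \<beta>(1)] \<beta>(2) by (auto simp: bij_betw_def)
  then have "bij_betw (the_inv_into ?K \<beta> \<circ> g) ?K ?K"
    using bij_betw_trans[OF inj_on_imp_bij_betw[OF g_inj] bij_betw_the_inv_into] by blast
  moreover have "bij_betw (the_inv_into ?K \<beta> \<circ> g) ?K ?K \<longleftrightarrow> bij_betw \<tau> ?K ?K"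
    by (rule bij_betw_cong) (simp add: \<tau>_def)
  ultimately have \<tau>: "\<tau> permutes ?K"
    by (auto intro: bij_imp_permutes simp: \<tau>_def)
  have "restrict (\<lambda>p. \<beta> (\<tau> p)) ?K = g"
  proof
    fix p
    show "restrict (\<lambda>p. \<beta> (\<tau> p)) ?K p = g p"
    proof (cases "p \<in> ?K")
      case True
      then show ?thesis
        using \<beta>(2) Q_inj_on[OF \<beta>(1)] by (simp add: \<tau>_def f_the_inv_into_f)
    next
      case False
      then show ?thesis
        unfolding restrict_def by (simp only: if_not_P[OF False] if_False PiE_arb[OF g_ext False])
    qed
  qed
  then show thesis
    using that[of "inv \<tau>" \<beta>] \<beta>(1) permutes_inv[OF \<tau>] permutes_inv_inv[OF \<tau>] by simp
qed

lemma Q_comp_inv_permutes_eqD: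
  assumes \<sigma>: "\<sigma> permutes {1..k}" and \<beta>: "\<beta> \<in> Q k n"
    and \<sigma>': "\<sigma>' permutes {1..k}" and \<beta>': "\<beta>' \<in> Q k n"
    and pointwise: "\<And>p. p \<in> {1..k} \<Longrightarrow> \<beta> (inv \<sigma> p) = \<beta>' (inv \<sigma>' p)"
  shows "\<sigma> = \<sigma>' \<and> \<beta> = \<beta>'"
proof -
  let ?K = "{1..k}"
  have inv\<sigma>: "inv \<sigma> permutes ?K" "inv \<sigma>' permutes ?K"
    using \<sigma> \<sigma>' by (simp_all add: permutes_inv)
  have "\<beta> ` ?K = \<beta> ` inv \<sigma> ` ?K"
    by (simp only: permutes_image[OF inv\<sigma>(1)])
  also have "\<dots> = (\<lambda>p. \<beta>' (inv \<sigma>' p)) ` ?K"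
    unfolding image_image using pointwise by (rule image_cong[OF refl])
  also have "\<dots> = \<beta>' ` inv \<sigma>' ` ?K"
    by (rule image_image[symmetric])
  also have "\<dots> = \<beta>' ` ?K"
    by (simp only: permutes_image[OF inv\<sigma>(2)])
  finally have "\<beta> = \<beta>'"
    using Q_eqI[OF \<beta> \<beta>'] by simp
  moreover have "inv \<sigma> = inv \<sigma>'"
  proof
    fix p
    show "inv \<sigma> p = inv \<sigma>' p"
    proof (cases "p \<in> ?K")
      case True
      then have "inv \<sigma> p \<in> ?K" "inv \<sigma>' p \<in> ?K"
        using permutes_in_image[OF inv\<sigma>(1)] permutes_in_image[OF inv\<sigma>(2)] by auto
      then show ?thesis
        using pointwise[OF True] \<open>\<beta> = \<beta>'\<close> inj_onD[OF Q_inj_on[OF \<beta>]] by auto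
    next
      case False
      then show ?thesis
        using permutes_not_in[OF inv\<sigma>(1)] permutes_not_in[OF inv\<sigma>(2)] by simp
    qed
  qed
  then have "inv (inv \<sigma>) = inv (inv \<sigma>')"
    by simp
  then have "\<sigma> = \<sigma>'"
    unfolding permutes_inv_inv[OF \<sigma>] permutes_inv_inv[OF \<sigma>'] .
  ultimately show ?thesis
    by simp
qed

lemma Q_comp_inv_permutes_in_injections:
  assumes \<sigma>: "\<sigma> permutes {1..k}" and \<beta>: "\<beta> \<in> Q k n"
  shows "restrict (\<lambda>p. \<beta> (inv \<sigma> p)) {1..k} \<in> injections {1..k} {1..n}"
proof -
  have "inj_on \<beta> (inv \<sigma> ` {1..k})"
    using Q_inj_on[OF \<beta>] by (simp only: permutes_image[OF permutes_inv[OF \<sigma>]])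
  then have "inj_on (\<beta> \<circ> inv \<sigma>) {1..k}"
    by (rule comp_inj_on[OF permutes_inj_on[OF permutes_inv[OF \<sigma>]]])
  moreover have "inj_on (restrict (\<lambda>p. \<beta> (inv \<sigma> p)) {1..k}) {1..k} \<longleftrightarrow> inj_on (\<beta> \<circ> inv \<sigma>) {1..k}"
    by (rule inj_on_cong) simp
  moreover have "\<beta> (inv \<sigma> p) \<in> {1..n}" if "p \<in> {1..k}" for p
    using that Q_image_subset[OF \<beta>] permutes_in_image[OF permutes_inv[OF \<sigma>]] by blast
  ultimately show ?thesis
    by (auto simp: injections_def)
qed

lemma bij_betw_permutes_Q_injections:
  "bij_betw (\<lambda>(\<sigma>, \<beta>). restrict (\<lambda>p. \<beta> (inv \<sigma> p)) {1..k})
     ({\<sigma>. \<sigma> permutes {1..k}} \<times> Q k n) (injections {1..k} {1..n})"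
  unfolding bij_betw_def
proof (intro conjI)
  let ?f = "\<lambda>(\<sigma>, \<beta>). restrict (\<lambda>p. \<beta> (inv \<sigma> p)) {1..k}"
  show "inj_on ?f ({\<sigma>. \<sigma> permutes {1..k}} \<times> Q k n)"
  proof (rule inj_onI, clarify)
    fix \<sigma> \<beta> \<sigma>' \<beta>'
    assume perm_Q: "\<sigma> permutes {1..k}" "\<beta> \<in> Q k n" "\<sigma>' permutes {1..k}" "\<beta>' \<in> Q k n"
      and eq: "restrict (\<lambda>p. \<beta> (inv \<sigma> p)) {1..k} = restrict (\<lambda>p. \<beta>' (inv \<sigma>' p)) {1..k}"
    have "\<beta> (inv \<sigma> p) = \<beta>' (inv \<sigma>' p)" if "p \<in> {1..k}" for p
      using fun_cong[OF eq, of p] that by simp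
    then show "\<sigma> = \<sigma>' \<and> \<beta> = \<beta>'"
      by (rule Q_comp_inv_permutes_eqD[OF perm_Q])
  qed
  have "g \<in> ?f ` ({\<sigma>. \<sigma> permutes {1..k}} \<times> Q k n)" if g: "g \<in> injections {1..k} {1..n}" for g
  proof -
    obtain \<sigma> \<beta> where "\<sigma> permutes {1..k}" "\<beta> \<in> Q k n" "g = ?f (\<sigma>, \<beta>)"
      using injections_decompose[OF g] by auto
    then show ?thesis
      by (intro image_eqI[of _ _ "(\<sigma>, \<beta>)"]) auto
  qed
  then show "?f ` ({\<sigma>. \<sigma> permutes {1..k}} \<times> Q k n) = injections {1..k} {1..n}"
    using Q_comp_inv_permutes_in_injections by auto
qed

lemma prod_X_sigma_beta:
  assumes \<sigma>: "\<sigma> permutes {1..k}" and \<beta>: "\<beta> \<in> Q k n" and \<pi>: "\<pi> permutes {1..n}"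
  shows "(\<Prod>i\<in>inv \<pi> ` \<beta> ` {1..k}. X_sigma_beta k Xs \<sigma> \<beta> i (\<pi> i)) =
    (\<Prod>p=1..k. Xs p (inv \<pi> (\<beta> (inv \<sigma> p))) (\<beta> (inv \<sigma> p)))"
proof -
  have inj: "inj_on (inv \<pi> \<circ> \<beta>) {1..k}"
    using Q_inj_on[OF \<beta>] permutes_inj[OF permutes_inv[OF \<pi>]] by (simp add: comp_inj_on inj_on_subset)
  have "(\<Prod>i\<in>inv \<pi> ` \<beta> ` {1..k}. X_sigma_beta k Xs \<sigma> \<beta> i (\<pi> i)) =
      (\<Prod>b=1..k. X_sigma_beta k Xs \<sigma> \<beta> (inv \<pi> (\<beta> b)) (\<pi> (inv \<pi> (\<beta> b))))"
    by (subst image_comp, subst prod.reindex[OF inj]) simp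
  also have "\<dots> = (\<Prod>b=1..k. Xs (\<sigma> b) (inv \<pi> (\<beta> b)) (\<beta> b))"
    using Q_inj_on[OF \<beta>] by (intro prod.cong refl) (simp add: X_sigma_beta_def permutes_inverses(1)[OF \<pi>] the_inv_into_f_f)
  also have "\<dots> = (\<Prod>p=1..k. Xs p (inv \<pi> (\<beta> (inv \<sigma> p))) (\<beta> (inv \<sigma> p)))"
    using prod.reindex_bij_betw[OF permutes_imp_bij[OF \<sigma>], of "\<lambda>p. Xs p (inv \<pi> (\<beta> (inv \<sigma> p))) (\<beta> (inv \<sigma> p))"]
    by (simp add: permutes_inverses(2)[OF \<sigma>])
  finally show ?thesis .
qed

lemma sum_injections_eq_sum_permutes_Q:
  assumes \<pi>: "\<pi> permutes {1..n}"
  shows "(\<Sum>g\<in>injections {1..k} {1..n}.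
            (\<Prod>p=1..k. Xs p (g p) (\<pi> (g p))) * (\<Prod>i\<in>{1..n} - g ` {1..k}. A i (\<pi> i))) =
    (\<Sum>\<sigma> | \<sigma> permutes {1..k}. \<Sum>\<beta>\<in>Q k n.
        (\<Prod>i\<in>inv \<pi> ` \<beta> ` {1..k}. X_sigma_beta k Xs \<sigma> \<beta> i (\<pi> i)) *
        (\<Prod>i\<in>{1..n} - inv \<pi> ` \<beta> ` {1..k}. A i (\<pi> i)))"
proof -
  let ?K = "{1..k}" and ?N = "{1..n}"
  define F where "F g = (\<Prod>p\<in>?K. Xs p (g p) (\<pi> (g p))) * (\<Prod>i\<in>?N - g ` ?K. A i (\<pi> i))" for g
  let ?h = "\<lambda>g. restrict (inv \<pi> \<circ> g) ?K"
  let ?f = "\<lambda>(\<sigma>, \<beta>). restrict (\<lambda>p. \<beta> (inv \<sigma> p)) ?K"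
  have "sum F (injections ?K ?N) = (\<Sum>g\<in>injections ?K ?N. F (?h g))"
    by (rule sum.reindex_bij_betw[OF bij_betw_injections_comp_permutes[OF permutes_inv[OF \<pi>]], symmetric])
  also have "\<dots> = (\<Sum>z\<in>{\<sigma>. \<sigma> permutes ?K} \<times> Q k n. F (?h (?f z)))"
    using sum.reindex_bij_betw[OF bij_betw_permutes_Q_injections, of "\<lambda>g. F (?h g)" k n] by simp
  also have "\<dots> = (\<Sum>\<sigma> | \<sigma> permutes ?K. \<Sum>\<beta>\<in>Q k n. F (?h (?f (\<sigma>, \<beta>))))"
    unfolding sum.cartesian_product by (rule sum.cong[OF refl]) auto
  also have "\<dots> = (\<Sum>\<sigma> | \<sigma> permutes ?K. \<Sum>\<beta>\<in>Q k n.
        (\<Prod>i\<in>inv \<pi> ` \<beta> ` ?K. X_sigma_beta k Xs \<sigma> \<beta> i (\<pi> i)) * (\<Prod>i\<in>?N - inv \<pi> ` \<beta> ` ?K. A i (\<pi> i)))"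
  proof (intro sum.cong refl)
    fix \<sigma> \<beta> assume "\<sigma> \<in> {\<sigma>. \<sigma> permutes ?K}" and \<beta>: "\<beta> \<in> Q k n"
    then have \<sigma>: "\<sigma> permutes ?K"
      by (simp only: mem_Collect_eq)
    have g: "?h (?f (\<sigma>, \<beta>)) p = inv \<pi> (\<beta> (inv \<sigma> p))" if "p \<in> ?K" for p
      using that by simp
    have "?h (?f (\<sigma>, \<beta>)) ` ?K = inv \<pi> ` \<beta> ` inv \<sigma> ` ?K"
      unfolding image_image using g by (rule image_cong[OF refl])
    also have "\<dots> = inv \<pi> ` \<beta> ` ?K"
      by (simp only: permutes_image[OF permutes_inv[OF \<sigma>]])
    finally have "?h (?f (\<sigma>, \<beta>)) ` ?K = inv \<pi> ` \<beta> ` ?K" .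
    moreover have "(\<Prod>p\<in>?K. Xs p (?h (?f (\<sigma>, \<beta>)) p) (\<pi> (?h (?f (\<sigma>, \<beta>)) p))) =
        (\<Prod>i\<in>inv \<pi> ` \<beta> ` ?K. X_sigma_beta k Xs \<sigma> \<beta> i (\<pi> i))"
      unfolding prod_X_sigma_beta[OF \<sigma> \<beta> \<pi>]
      using g by (intro prod.cong refl) (simp add: permutes_inverses(1)[OF \<pi>])
    ultimately show "F (?h (?f (\<sigma>, \<beta>))) = (\<Prod>i\<in>inv \<pi> ` \<beta> ` ?K. X_sigma_beta k Xs \<sigma> \<beta> i (\<pi> i)) *
        (\<Prod>i\<in>?N - inv \<pi> ` \<beta> ` ?K. A i (\<pi> i))"
      unfolding F_def by simp
  qed
  finally show ?thesis
    unfolding F_def .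
qed

lemma Dk_d_chi_eq_sum_dirsum_ab:
  "Dk_d_chi n chi k A Xs =
     (\<Sum>\<sigma>\<in>{\<sigma>. \<sigma> permutes {1..k}}. \<Sum>\<alpha>\<in>Q k n. \<Sum>\<beta>\<in>Q k n.
        d_chi n chi (dirsum_ab n k (submat k (X_sigma_beta k Xs \<sigma> \<beta>) \<alpha> \<beta>) \<alpha> \<beta> (compl_submat n k A \<alpha> \<beta>)))"
proof -
  let ?S = "{\<sigma>. \<sigma> permutes {1..k}}" and ?R = "{\<pi>. \<pi> permutes {1..n}}"
  let ?M = "\<lambda>\<sigma> \<alpha> \<beta>. dirsum_ab n k (submat k (X_sigma_beta k Xs \<sigma> \<beta>) \<alpha> \<beta>) \<alpha> \<beta> (compl_submat n k A \<alpha> \<beta>)"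
  have "Dk_d_chi n chi k A Xs =
      (\<Sum>\<pi>\<in>?R. chi \<pi> * (\<Sum>\<sigma>\<in>?S. \<Sum>\<beta>\<in>Q k n. \<Sum>\<alpha>\<in>Q k n. \<Prod>i=1..n. ?M \<sigma> \<alpha> \<beta> i (\<pi> i)))"
    unfolding Dk_d_chi_expansion
  proof (rule sum.cong[OF refl])
    fix \<pi> assume "\<pi> \<in> ?R"
    then have \<pi>: "\<pi> permutes {1..n}"
      by simp
    show "chi \<pi> * (\<Sum>g\<in>injections {1..k} {1..n}.
            (\<Prod>p=1..k. Xs p (g p) (\<pi> (g p))) * (\<Prod>i\<in>{1..n} - g ` {1..k}. A i (\<pi> i))) =
        chi \<pi> * (\<Sum>\<sigma>\<in>?S. \<Sum>\<beta>\<in>Q k n. \<Sum>\<alpha>\<in>Q k n. \<Prod>i=1..n. ?M \<sigma> \<alpha> \<beta> i (\<pi> i))"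
      unfolding sum_injections_eq_sum_permutes_Q[OF \<pi>]
      by (intro arg_cong[where f = "(*) (chi \<pi>)"] sum.cong refl sum_Q_prod_dirsum_ab[OF _ \<pi>, symmetric])
  qed
  also have "\<dots> = (\<Sum>\<sigma>\<in>?S. \<Sum>\<beta>\<in>Q k n. \<Sum>\<alpha>\<in>Q k n. \<Sum>\<pi>\<in>?R. chi \<pi> * (\<Prod>i=1..n. ?M \<sigma> \<alpha> \<beta> i (\<pi> i)))"
    by (simp only: sum_distrib_left sum.swap[of _ ?R])
  also have "\<dots> = (\<Sum>\<sigma>\<in>?S. \<Sum>\<beta>\<in>Q k n. \<Sum>\<alpha>\<in>Q k n. d_chi n chi (?M \<sigma> \<alpha> \<beta>))"
    unfolding d_chi_def ..
  also have "\<dots> = (\<Sum>\<sigma>\<in>?S. \<Sum>\<alpha>\<in>Q k n. \<Sum>\<beta>\<in>Q k n. d_chi n chi (?M \<sigma> \<alpha> \<beta>))"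
    by (rule sum.cong[OF refl]) (rule sum.swap)
  finally show ?thesis .
qed

lemma Dk_d_chi_diagonal:
  "Dk_d_chi n chi k A (\<lambda>_. X) =
     fact k * (\<Sum>\<alpha>\<in>Q k n. \<Sum>\<beta>\<in>Q k n.
        d_chi n chi (dirsum_ab n k (submat k X \<alpha> \<beta>) \<alpha> \<beta> (compl_submat n k A \<alpha> \<beta>)))"
proof -
  have "submat k (X_sigma_beta k (\<lambda>_. X) \<sigma> \<beta>) \<alpha> \<beta> = submat k X \<alpha> \<beta>" for \<sigma> \<alpha> \<beta>
    by (auto simp: fun_eq_iff submat_def X_sigma_beta_def)
  moreover have "card {\<sigma>. \<sigma> permutes {1..k}} = fact k"
    by (rule card_permutations) simp_all
  ultimately show ?thesis
    by (simp add: Dk_d_chi_eq_sum_dirsum_ab)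
qed

theorem mainTheorem6:
  fixes n k :: nat and chi :: "(nat \<Rightarrow> nat) \<Rightarrow> complex"
    and A X :: cmat and Xs :: "nat \<Rightarrow> cmat"
  assumes "n \<ge> 1" and "irreducible_character n chi" and "1 \<le> k" and "k \<le> n"
  shows "Dk_d_chi n chi k A Xs =
           (\<Sum>\<sigma>\<in>{\<sigma>. \<sigma> permutes {1..k}}. \<Sum>\<alpha>\<in>Q k n. \<Sum>\<beta>\<in>Q k n.
              d_chi n chi (dirsum_ab n k (submat k (X_sigma_beta k Xs \<sigma> \<beta>) \<alpha> \<beta>) \<alpha> \<beta>
                                 (compl_submat n k A \<alpha> \<beta>)))
       \<and> Dk_d_chi n chi k A (\<lambda>_. X) =
           fact k * (\<Sum>\<alpha>\<in>Q k n. \<Sum>\<beta>\<in>Q k n.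
              d_chi n chi (dirsum_ab n k (submat k X \<alpha> \<beta>) \<alpha> \<beta> (compl_submat n k A \<alpha> \<beta>)))"
  using Dk_d_chi_eq_sum_dirsum_ab Dk_d_chi_diagonal by blast

end
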